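(* Let $p$ be a prime and $N$ an integer with $p^2>N\ge1$. The linear complexity $L_p(N)$ of the sequence $q_p(u)$, $u=0,\ldots,N-1$ (viewed as elements of $\mathbb{F}_p$), satisfies $$L_p(N)\ge\frac12\min\{p-1,\,N-p-1\}.$$
   Context: For a prime $p$ and an integer $u$ with $\gcd(u,p)=1$, the Fermat quotient $q_p(u)$ is the unique integer with $q_p(u)\equiv (u^{p-1}-1)/p \pmod p$ and $0\le q_p(u)\le p-1$; also $q_p(kp)=0$ for all $k\in\mathbb{Z}$. The linear complexity of an $N$-element sequence $s_0,\ldots,s_{N-1}$ in a ring $\mathcal{R}$ is the smallest $L$ such that $s_{u+L}=c_{L-1}s_{u+L-1}+\cdots+c_0s_u$ for all $0\le u\le N-L-1$, for some $c_0,\ldots,c_{L-1}\in\mathcal{R}$. *)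

theory Defs
  imports "HOL-Number_Theory.Number_Theory"
begin

definition fermat_quotient :: "nat \<Rightarrow> int \<Rightarrow> int" where
  "fermat_quotient p u =
     (if int p dvd u then 0
      else ((u ^ (p - 1) - 1) div int p) mod int p)"

definition lin_rec_mod :: "int \<Rightarrow> (nat \<Rightarrow> int) \<Rightarrow> nat \<Rightarrow> nat \<Rightarrow> bool" where
  "lin_rec_mod m s N L \<longleftrightarrow>
     (\<exists>c :: nat \<Rightarrow> int. \<forall>u. u + L + 1 \<le> N \<longrightarrow>
        [s (u + L) = (\<Sum>j<L. c j * s (u + j))] (mod m))"

definition linear_complexity_mod :: "int \<Rightarrow> (nat \<Rightarrow> int) \<Rightarrow> nat \<Rightarrow> nat" where
  "linear_complexity_mod m s N = (LEAST L. lin_rec_mod m s N L)"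

end

theory Submission
  imports Defs "HOL-Computational_Algebra.Polynomial"
begin

text \<open>Expanding (v + p)^(p-1) modulo p^2 gives q_p(v + p) \<equiv> q_p(v) - 1/v (mod p) for p \<not>| v.
  Hence the differences t(v) = s(v + p) - s(v) of the sequence s(u) = q_p(u) are the negated
  inverses -1/v modulo p for 1 \<le> v < p, and t satisfies every linear recurrence of s on a
  window shortened by p. A recurrence c of order L for the inverses, valid at 1, ..., L + 1,
  says that the polynomial obtained from \<Sum>j<L. c_j/(x + j) - 1/(x + L) by clearing denominators,
  which has degree at most L, vanishes at L + 1 distinct residues; so it vanishes identically
  mod p. Evaluating it at x = -L gives \<Prod>j<L. (j - L) \<noteq> 0 mod p, a contradiction as soon as
  2L + 1 < p and the window contains 2L + 2 + p terms.\<close>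

lemma power_Suc_add_expansion:
  fixes v a :: "'a::comm_ring_1"
  shows "\<exists>K. (v + a) ^ Suc n = v ^ Suc n + of_nat (Suc n) * a * v ^ n + a\<^sup>2 * K"
proof (induction n)
  case 0
  show ?case by (intro exI[of _ 0]) simp
next
  case (Suc n)
  then obtain K where "(v + a) ^ Suc n = v ^ Suc n + of_nat (Suc n) * a * v ^ n + a\<^sup>2 * K"
    by blast
  then have "(v + a) ^ Suc (Suc n) = v ^ Suc (Suc n) + of_nat (Suc (Suc n)) * a * v ^ Suc n
      + a\<^sup>2 * (v * K + of_nat (Suc n) * v ^ n + a * K)"
    by (simp add: algebra_simps power2_eq_square)
  then show ?case by blast
qed

lemma fermat_theorem_of_nat:
  assumes "prime p" and "\<not> p dvd v"
  shows "[int v ^ (p - 1) = 1] (mod int p)"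
  using fermat_theorem[OF assms] by (metis cong_int_iff of_nat_1 of_nat_power)

lemma fermat_quotient_cong:
  assumes "prime p" and "\<not> p dvd v"
  shows "[int p * fermat_quotient p (int v) = int v ^ (p - 1) - 1] (mod (int p)\<^sup>2)"
proof -
  obtain Q where Q: "int v ^ (p - 1) - 1 = int p * Q"
    using fermat_theorem_of_nat[OF assms] by (metis cong_iff_dvd_diff dvd_def)
  have "int p * fermat_quotient p (int v) = int p * (Q mod int p)"
    using assms(2) prime_gt_0_nat[OF assms(1)] unfolding fermat_quotient_def Q by simp
  also have "\<dots> = int p * Q - (int p)\<^sup>2 * (Q div int p)"
    by (simp add: minus_div_mult_eq_mod[symmetric] power2_eq_square algebra_simps)
  finally show ?thesis
    unfolding Q by (simp add: cong_iff_dvd_diff)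
qed

lemma fermat_quotient_add_prime:
  assumes p: "prime p" and v: "\<not> p dvd v"
  shows "[(fermat_quotient p (int (v + p)) - fermat_quotient p (int v)) * int v = -1] (mod int p)"
proof -
  have e: "Suc (p - 2) = p - 1" and p1: "int (p - 1) = int p - 1"
    using prime_ge_2_nat[OF p] by auto
  obtain K where K: "int (v + p) ^ (p - 1)
      = int v ^ (p - 1) + (int p - 1) * int p * int v ^ (p - 2) + (int p)\<^sup>2 * K"
    using power_Suc_add_expansion[of "int v" "int p" "p - 2"] unfolding e p1 by auto
  have vp: "\<not> p dvd v + p"
    using v by (simp add: dvd_add_left_iff)
  have "int p * ((fermat_quotient p (int (v + p)) - fermat_quotient p (int v)) * int v + 1)
      = (int p * fermat_quotient p (int (v + p)) - int p * fermat_quotient p (int v)) * int v + int p"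
    by (simp add: algebra_simps)
  also have "[\<dots> = ((int (v + p) ^ (p - 1) - 1) - (int v ^ (p - 1) - 1)) * int v + int p] (mod (int p)\<^sup>2)"
    using fermat_quotient_cong[OF p vp] fermat_quotient_cong[OF p v]
    by (intro cong_add cong_scalar_right cong_diff) auto
  also have "((int (v + p) ^ (p - 1) - 1) - (int v ^ (p - 1) - 1)) * int v + int p
      = (int p)\<^sup>2 * (int v ^ (p - 1) + K * int v) - int p * (int v ^ (p - 1) - 1)"
    using power_Suc[of "int v" "p - 2"] unfolding K e by (simp add: algebra_simps power2_eq_square)
  also have "[\<dots> = 0] (mod (int p)\<^sup>2)"
    using fermat_theorem_of_nat[OF p v]
    by (simp add: cong_0_iff cong_iff_dvd_diff power2_eq_square)
  finally have "int p dvd (fermat_quotient p (int (v + p)) - fermat_quotient p (int v)) * int v + 1"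
    using prime_gt_0_nat[OF p] by (simp add: cong_0_iff power2_eq_square)
  then show ?thesis
    by (simp add: cong_iff_dvd_diff)
qed

lemma prime_dvd_poly_if_many_roots:
  fixes h :: "int poly"
  assumes "prime p" "S \<subseteq> {0..<p}" "degree h < card S" "\<forall>x\<in>S. p dvd poly h x"
  shows "p dvd poly h y"
  using assms(2-4)
proof (induction "degree h" arbitrary: h S y rule: less_induct)
  case (less h S)
  then obtain x0 where x0: "x0 \<in> S"
    by (metis card.empty equals0I not_less0)
  define q where "q = synthetic_div h x0"
  have h_split: "poly h y = (y - x0) * poly q y + poly h x0" for y
  proof -
    have "poly h y = poly ([:-x0, 1:] * q + [:poly h x0:]) y"
      unfolding q_def synthetic_div_correct' ..
    then show ?thesis
      by (simp add: algebra_simps)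
  qed
  have h_x0: "p dvd poly h x0"
    using less.prems x0 by auto
  show ?case
  proof (cases "degree h = 0")
    case True
    then obtain c where "h = [:c:]"
      by (rule degree_eq_zeroE)
    then show ?thesis
      using h_x0 by simp
  next
    case False
    have deg_q: "degree q < degree h" "degree q < card (S - {x0})"
      using False less.prems x0 by (simp_all add: q_def degree_synthetic_div card_Diff_singleton)
    have "p dvd poly q x" if x: "x \<in> S - {x0}" for x
    proof -
      have "p dvd (x - x0) * poly q x"
        using h_split[of x] dvd_diff[of p "poly h x" "poly h x0"] less.prems x h_x0 by auto
      moreover have "\<not> p dvd (x - x0)"
      proof
        assume dvd: "p dvd x - x0"
        have "x \<in> {0..<p}" "x0 \<in> {0..<p}" "x - x0 \<noteq> 0"
          using x x0 less.prems(1) by auto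
        then show False
          using dvd_imp_le_int[OF _ dvd] by auto
      qed
      ultimately show ?thesis
        using assms(1) prime_dvd_mult_iff by blast
    qed
    then have "p dvd poly q y"
      using less.hyps[OF deg_q(1), of "S - {x0}"] less.prems deg_q(2) by auto
    then show ?thesis
      using h_split[of y] h_x0 by simp
  qed
qed

text \<open>(\<Prod>i\<le>L. x + i) \<cdot> (1/(x + L) - \<Sum>j<L. c j/(x + j)), written without denominators.\<close>

definition cleared_recurrence_poly :: "nat \<Rightarrow> (nat \<Rightarrow> int) \<Rightarrow> int poly" where
  "cleared_recurrence_poly L c =
     (\<Prod>i<L. [:int i, 1:]) - (\<Sum>j<L. smult (c j) (\<Prod>i\<in>{0..L} - {j}. [:int i, 1:]))"

lemma degree_cleared_recurrence_poly: "degree (cleared_recurrence_poly L c) \<le> L"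
  unfolding cleared_recurrence_poly_def
proof (rule degree_diff_le)
  have deg: "degree (\<Prod>i\<in>I. [:int i, 1:]) \<le> card I" if "finite I" for I :: "nat set"
    using degree_prod_sum_le[OF that, of "\<lambda>i. [:int i, 1:]"] by (simp add: o_def)
  show "degree (\<Prod>i<L. [:int i, 1:]) \<le> L"
    using deg[of "{..<L}"] by simp
  show "degree (\<Sum>j<L. smult (c j) (\<Prod>i\<in>{0..L} - {j}. [:int i, 1:])) \<le> L"
  proof (intro degree_sum_le order.trans[OF degree_smult_le])
    fix j assume "j \<in> {..<L}"
    then show "degree (\<Prod>i\<in>{0..L} - {j}. [:int i, 1:]) \<le> L"
      using deg[of "{0..L} - {j}"] by simp
  qed simp
qed

lemma poly_cleared_recurrence_poly:
  "poly (cleared_recurrence_poly L c) x =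
     (\<Prod>i\<in>{0..L} - {L}. x + int i) - (\<Sum>j<L. c j * (\<Prod>i\<in>{0..L} - {j}. x + int i))"
proof -
  have "{0..L} - {L} = {..<L}"
    by auto
  then show ?thesis
    by (simp add: cleared_recurrence_poly_def poly_prod poly_sum add.commute)
qed

lemma cleared_recurrence_poly_root:
  assumes inverse: "\<And>j. j \<le> L \<Longrightarrow> [t j * (x + int j) = -1] (mod m)"
    and recurrence: "[t L = (\<Sum>j<L. c j * t j)] (mod m)"
  shows "[poly (cleared_recurrence_poly L c) x = 0] (mod m)"
proof -
  define P where "P = (\<lambda>j. \<Prod>i\<in>{0..L} - {j}. x + int i)"
  define Q where "Q = (\<Prod>i\<in>{0..L}. x + int i)"
  have t_Q: "[P j = - (t j * Q)] (mod m)" if "j \<le> L" for j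
  proof -
    have "Q = (x + int j) * P j"
      unfolding Q_def P_def using that by (subst prod.remove[of _ j]) auto
    then have "- (t j * Q) = - (t j * (x + int j)) * P j"
      by (simp add: mult.assoc)
    also have "[\<dots> = - (-1) * P j] (mod m)"
      using inverse[OF that] by (intro cong_scalar_right cong_minus_minus_iff[THEN iffD2])
    finally show ?thesis
      by (simp add: cong_sym_eq)
  qed
  have "poly (cleared_recurrence_poly L c) x = P L - (\<Sum>j<L. c j * P j)"
    unfolding poly_cleared_recurrence_poly P_def ..
  also have "[\<dots> = - (t L * Q) - (\<Sum>j<L. c j * - (t j * Q))] (mod m)"
    using t_Q by (intro cong_diff cong_sum cong_scalar_left) auto
  also have "- (t L * Q) - (\<Sum>j<L. c j * - (t j * Q)) = - (t L - (\<Sum>j<L. c j * t j)) * Q"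
    by (simp add: sum_distrib_left sum_negf algebra_simps)
  also have "[\<dots> = - 0 * Q] (mod m)"
    using recurrence by (intro cong_scalar_right cong_minus_minus_iff[THEN iffD2]) (simp add: cong_iff_dvd_diff)
  finally show ?thesis
    by simp
qed

lemma poly_cleared_recurrence_poly_at_minus:
  "poly (cleared_recurrence_poly L c) (- int L) = (\<Prod>i<L. int i - int L)"
proof -
  have "(\<Sum>j<L. c j * (\<Prod>i\<in>{0..L} - {j}. int i - int L)) = 0"
    by (intro sum.neutral ballI mult_eq_0_iff[THEN iffD2] disjI2 prod_zero bexI[of _ L]) auto
  moreover have "{0..L} - {L} = {..<L}"
    by auto
  ultimately show ?thesis
    by (simp add: poly_cleared_recurrence_poly)
qed

lemma no_short_recurrence_for_inverses:
  fixes p L :: nat and t c :: "nat \<Rightarrow> int"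
  assumes p: "prime p" and L: "2 * L + 1 < p"
    and inverse: "\<And>v. 1 \<le> v \<Longrightarrow> v \<le> 2 * L + 1 \<Longrightarrow> [t v * int v = -1] (mod int p)"
    and recurrence: "\<And>u. 1 \<le> u \<Longrightarrow> u \<le> L + 1 \<Longrightarrow>
      [t (u + L) = (\<Sum>j<L. c j * t (u + j))] (mod int p)"
  shows False
proof -
  let ?H = "cleared_recurrence_poly L c"
  have "int p dvd poly ?H (int u)" if u: "1 \<le> u" "u \<le> L + 1" for u
  proof -
    have "[poly ?H (int u) = 0] (mod int p)"
      using inverse[of "u + _"] recurrence[OF u] u
      by (intro cleared_recurrence_poly_root[where t = "\<lambda>j. t (u + j)"]) (auto simp: add.commute)
    then show ?thesis
      by (simp add: cong_0_iff)
  qed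
  then have "int p dvd poly ?H (- int L)"
    using L degree_cleared_recurrence_poly[of L c] prime_nat_int_transfer[THEN iffD2, OF p]
    by (intro prime_dvd_poly_if_many_roots[where S = "int ` {1..L + 1}"]) (auto simp: card_image)
  then obtain j where "j < L" "int p dvd int j - int L"
    using p by (auto simp: poly_cleared_recurrence_poly_at_minus prime_dvd_prod_iff)
  then have "p dvd L - j"
    by (metis dvd_diff_commute int_dvd_int_iff less_imp_le_nat of_nat_diff)
  then show False
    using \<open>j < L\<close> L by (auto dest: dvd_imp_le)
qed

lemma lin_rec_mod_linear_complexity:
  "lin_rec_mod m s N (linear_complexity_mod m s N)"
proof -
  have "lin_rec_mod m s N N"
    unfolding lin_rec_mod_def by auto
  then show ?thesis
    unfolding linear_complexity_mod_def by (rule LeastI)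
qed

lemma recurrence_shift_difference:
  fixes s c :: "nat \<Rightarrow> 'a::unique_euclidean_ring"
  assumes "\<And>u. u + L + 1 \<le> N \<Longrightarrow> [s (u + L) = (\<Sum>j<L. c j * s (u + j))] (mod m)"
    and "u + k + L + 1 \<le> N"
  shows "[s (u + L + k) - s (u + L) = (\<Sum>j<L. c j * (s (u + j + k) - s (u + j)))] (mod m)"
proof -
  have "[s (u + k + L) - s (u + L)
      = (\<Sum>j<L. c j * s (u + k + j)) - (\<Sum>j<L. c j * s (u + j))] (mod m)"
    using assms(1)[of "u + k"] assms(1)[of u] assms(2) by (intro cong_diff) auto
  then show ?thesis
    by (simp add: sum_subtractf right_diff_distrib ac_simps)
qed

theorem theorem13:
  fixes p N :: nat
  assumes "prime p" and "1 \<le> N" and "N < p ^ 2"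
  shows "2 * real (linear_complexity_mod (int p) (\<lambda>u. fermat_quotient p (int u)) N)
           \<ge> min (real p - 1) (real N - real p - 1)"
proof (rule ccontr)
  define s where "s = (\<lambda>u. fermat_quotient p (int u))"
  define L where "L = linear_complexity_mod (int p) s N"
  assume "\<not> ?thesis"
  then have L_small: "2 * L + 1 < p" "2 * L + 2 + p \<le> N"
    unfolding s_def[symmetric] L_def[symmetric] by linarith+
  obtain c where c: "\<And>u. u + L + 1 \<le> N \<Longrightarrow> [s (u + L) = (\<Sum>j<L. c j * s (u + j))] (mod int p)"
    using lin_rec_mod_linear_complexity[of "int p" s N] unfolding L_def[symmetric] lin_rec_mod_def
    by blast
  show False
  proof (rule no_short_recurrence_for_inverses[OF \<open>prime p\<close> L_small(1)])
    fix v assume "1 \<le> v" "v \<le> 2 * L + 1"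
    then have "\<not> p dvd v"
      using L_small(1) by (auto dest: dvd_imp_le)
    then show "[(s (v + p) - s v) * int v = -1] (mod int p)"
      unfolding s_def by (rule fermat_quotient_add_prime[OF \<open>prime p\<close>])
  next
    fix u assume "1 \<le> u" "u \<le> L + 1"
    then show "[s (u + L + p) - s (u + L) = (\<Sum>j<L. c j * (s (u + j + p) - s (u + j)))] (mod int p)"
      using L_small(2) by (intro recurrence_shift_difference[OF c]) auto
  qed
qed

end
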